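(* Let $\Theta$, $\mathtt{info}_K$, $\mathtt{good}_K$ and $\mathtt{max}_K$ (for $K\subseteq I$) be as in the context. For every model $\mathcal{M}=\langle W,V\rangle$, $w\in W$ and $X\subseteq W$: (1) for every $L\subseteq I$, if $\mathcal{M},w,X\vDash\mathtt{good}_L$ then $\llbracket\mathtt{info}_L\rrbracket^{\mathcal{M},X}$ is a $\Theta$-subset of $X$; (2) if $Y$ is a maximal $\Theta$-subset of $X$, then there is $K\subseteq I$ such that $Y=\llbracket\mathtt{info}_K\rrbracket^{\mathcal{M},X}$ and $\mathcal{M},w,X\vDash\mathtt{max}_K$; (3) for every $L\subseteq I$, if $\mathcal{M},w,X\vDash\mathtt{max}_L$ then $\llbracket\mathtt{info}_L\rrbracket^{\mathcal{M},X}$ is a maximal $\Theta$-subset of $X$.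
   Context: Formulas of the modal language $\mathcal{L}$: $\varphi::=p\mid\neg\varphi\mid(\varphi\wedge\varphi)\mid\Box\varphi$ with $\vee,\to$ as usual and $\Diamond\varphi:=\neg\Box\neg\varphi$; nonmodal formulas are those without $\Box$. A model is $\mathcal{M}=\langle W,V\rangle$, $W$ nonempty, $V(p)\subseteq W$. For $w\in W$, $X\subseteq W$: $\mathcal{M},w,X\vDash p$ iff $w\in V(p)$; $\neg,\wedge$ Boolean; $\mathcal{M},w,X\vDash\Box\varphi$ iff $\mathcal{M},v,X\vDash\varphi$ for all $v\in X$. $\llbracket\varphi\rrbracket^{\mathcal{M},Y}=\{v\in Y\mid\mathcal{M},v,Y\vDash\varphi\}$. Fix $\Theta=\bigvee_{i\in I}\theta_i$ with $I$ finite and $\theta_i=\varphi_i\wedge\Box\psi_i\wedge\bigwedge_{n\in D_i}\Diamond\chi_n$, where all $\varphi_i,\psi_i,\chi_n$ are nonmodal and each $D_i$ is a finite index set. For $K\subseteq I$: $\mathtt{info}_K:=(\bigvee_{k\in K}\varphi_k)\wedge\bigwedge_{k\in K}\psi_k$; $\mathtt{good}_K:=\bigwedge_{k\in K}\bigwedge_{n\in D_k}\Diamond(\mathtt{info}_K\wedge\chi_n)$; $\mathtt{max}_K:=\mathtt{good}_K\wedge\bigwedge_{L\subseteq I}\big((\Box(\mathtt{info}_K\to\mathtt{info}_L)\wedge\Diamond(\neg\mathtt{info}_K\wedge\mathtt{info}_L))\to\neg\mathtt{good}_L\big)$ (empty disjunction is $\bot$, empty conjunction is $\top$). A set $Y\subseteq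 X$ is a $\Theta$-subset of $X$ if $Y\subseteq\llbracket\Theta\rrbracket^{\mathcal{M},Y}$; it is a maximal $\Theta$-subset if no $\Theta$-subset $Z$ of $X$ satisfies $Y\subsetneq Z$. *)

theory Defs
  imports Main
begin

datatype 'p fm = Atom 'p | Neg "'p fm" | Conj "'p fm" "'p fm" | Box "'p fm"

definition Disj :: "'p fm \<Rightarrow> 'p fm \<Rightarrow> 'p fm" where
  "Disj a b = Neg (Conj (Neg a) (Neg b))"
definition Imp :: "'p fm \<Rightarrow> 'p fm \<Rightarrow> 'p fm" where
  "Imp a b = Neg (Conj a (Neg b))"
definition Dia :: "'p fm \<Rightarrow> 'p fm" where
  "Dia a = Neg (Box (Neg a))"
definition Top :: "'p fm" where
  "Top = Neg (Conj (Atom undefined) (Neg (Atom undefined)))"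
definition Bot :: "'p fm" where
  "Bot = Neg Top"

fun nonmodal :: "'p fm \<Rightarrow> bool" where
  "nonmodal (Atom p) = True"
| "nonmodal (Neg a) = nonmodal a"
| "nonmodal (Conj a b) = (nonmodal a \<and> nonmodal b)"
| "nonmodal (Box a) = False"

definition BigConj :: "'i set \<Rightarrow> ('i \<Rightarrow> 'p fm) \<Rightarrow> 'p fm" where
  "BigConj S f = foldr (\<lambda>x acc. Conj (f x) acc) (SOME xs. set xs = S \<and> distinct xs) Top"
definition BigDisj :: "'i set \<Rightarrow> ('i \<Rightarrow> 'p fm) \<Rightarrow> 'p fm" where
  "BigDisj S f = foldr (\<lambda>x acc. Disj (f x) acc) (SOME xs. set xs = S \<and> distinct xs) Bot"

fun sat :: "('p \<Rightarrow> 'w set) \<Rightarrow> 'w \<Rightarrow> 'w set \<Rightarrow> 'p fm \<Rightarrow> bool" where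
  "sat V w X (Atom p) = (w \<in> V p)"
| "sat V w X (Neg a) = (\<not> sat V w X a)"
| "sat V w X (Conj a b) = (sat V w X a \<and> sat V w X b)"
| "sat V w X (Box a) = (\<forall>v\<in>X. sat V v X a)"

definition ext :: "('p \<Rightarrow> 'w set) \<Rightarrow> 'w set \<Rightarrow> 'p fm \<Rightarrow> 'w set" where
  "ext V Y a = {v \<in> Y. sat V v Y a}"

definition theta :: "('i \<Rightarrow> 'p fm) \<Rightarrow> ('i \<Rightarrow> 'p fm) \<Rightarrow> ('i \<Rightarrow> 'n set) \<Rightarrow> ('n \<Rightarrow> 'p fm) \<Rightarrow> 'i \<Rightarrow> 'p fm" where
  "theta phi psi D chi i = Conj (phi i) (Conj (Box (psi i)) (BigConj (D i) (\<lambda>n. Dia (chi n))))"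

definition Theta :: "'i set \<Rightarrow> ('i \<Rightarrow> 'p fm) \<Rightarrow> ('i \<Rightarrow> 'p fm) \<Rightarrow> ('i \<Rightarrow> 'n set) \<Rightarrow> ('n \<Rightarrow> 'p fm) \<Rightarrow> 'p fm" where
  "Theta I phi psi D chi = BigDisj I (theta phi psi D chi)"

definition info :: "('i \<Rightarrow> 'p fm) \<Rightarrow> ('i \<Rightarrow> 'p fm) \<Rightarrow> 'i set \<Rightarrow> 'p fm" where
  "info phi psi K = Conj (BigDisj K phi) (BigConj K psi)"

definition good :: "('i \<Rightarrow> 'p fm) \<Rightarrow> ('i \<Rightarrow> 'p fm) \<Rightarrow> ('i \<Rightarrow> 'n set) \<Rightarrow> ('n \<Rightarrow> 'p fm) \<Rightarrow> 'i set \<Rightarrow> 'p fm" where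
  "good phi psi D chi K = BigConj K (\<lambda>k. BigConj (D k) (\<lambda>n. Dia (Conj (info phi psi K) (chi n))))"

definition maxf :: "'i set \<Rightarrow> ('i \<Rightarrow> 'p fm) \<Rightarrow> ('i \<Rightarrow> 'p fm) \<Rightarrow> ('i \<Rightarrow> 'n set) \<Rightarrow> ('n \<Rightarrow> 'p fm) \<Rightarrow> 'i set \<Rightarrow> 'p fm" where
  "maxf I phi psi D chi K = Conj (good phi psi D chi K)
     (BigConj (Pow I) (\<lambda>L. Imp (Conj (Box (Imp (info phi psi K) (info phi psi L)))
                                     (Dia (Conj (Neg (info phi psi K)) (info phi psi L))))
                               (Neg (good phi psi D chi L))))"

definition Theta_subset :: "('p \<Rightarrow> 'w set) \<Rightarrow> 'p fm \<Rightarrow> 'w set \<Rightarrow> 'w set \<Rightarrow> bool" where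
  "Theta_subset V Th X Y \<longleftrightarrow> Y \<subseteq> X \<and> Y \<subseteq> ext V Y Th"

definition max_Theta_subset :: "('p \<Rightarrow> 'w set) \<Rightarrow> 'p fm \<Rightarrow> 'w set \<Rightarrow> 'w set \<Rightarrow> bool" where
  "max_Theta_subset V Th X Y \<longleftrightarrow> Theta_subset V Th X Y \<and> \<not> (\<exists>Z. Theta_subset V Th X Z \<and> Y \<subset> Z)"

end

theory Submission
  imports Defs
begin

text \<open>Every \<open>\<Theta>\<close>-subset \<open>Z\<close> of \<open>X\<close> lies inside \<open>\<lbrakk>info\<^sub>K\<rbrakk>\<close> for the set \<open>K\<close> of
  disjuncts whose box and diamond parts hold on \<open>Z\<close>, and this \<open>K\<close> is good; conversely
  \<open>\<lbrakk>info\<^sub>L\<rbrakk>\<close> is a \<open>\<Theta>\<close>-subset whenever \<open>L\<close> is good, since the nonmodal parts do not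
  depend on the set of worlds. So the \<open>\<Theta>\<close>-subsets are cofinal with the sets \<open>\<lbrakk>info\<^sub>L\<rbrakk>\<close>,
  \<open>L\<close> good, and maximality among either family coincides; \<open>max\<^sub>K\<close> expresses exactly
  maximality among the latter.\<close>

lemma sat_Top [simp]: "sat V w X Top"
  by (simp add: Top_def)

lemma sat_Bot [simp]: "\<not> sat V w X Bot"
  by (simp add: Bot_def)

lemma sat_Dia [simp]: "sat V w X (Dia a) \<longleftrightarrow> (\<exists>v\<in>X. sat V v X a)"
  by (simp add: Dia_def)

lemma sat_Imp [simp]: "sat V w X (Imp a b) \<longleftrightarrow> (sat V w X a \<longrightarrow> sat V w X b)"
  by (simp add: Imp_def)

lemma sat_Disj [simp]: "sat V w X (Disj a b) \<longleftrightarrow> sat V w X a \<or> sat V w X b"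
  by (simp add: Disj_def)

lemma nonmodal_Top [simp]: "nonmodal Top" and nonmodal_Bot [simp]: "nonmodal Bot"
  and nonmodal_Disj [simp]: "nonmodal (Disj a b) \<longleftrightarrow> nonmodal a \<and> nonmodal b"
  by (simp_all add: Top_def Bot_def Disj_def)

lemma set_some_distinct_list: "finite S \<Longrightarrow> set (SOME xs. set xs = S \<and> distinct xs) = S"
  using someI_ex[OF finite_distinct_list] by blast

lemma sat_BigConj:
  assumes "finite S"
  shows "sat V w X (BigConj S f) \<longleftrightarrow> (\<forall>x\<in>S. sat V w X (f x))"
proof -
  have "sat V w X (foldr (\<lambda>x acc. Conj (f x) acc) xs Top) \<longleftrightarrow> (\<forall>x\<in>set xs. sat V w X (f x))" for xs
    by (induction xs) auto
  then show ?thesis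
    unfolding BigConj_def using set_some_distinct_list[OF assms] by simp
qed

lemma sat_BigDisj:
  assumes "finite S"
  shows "sat V w X (BigDisj S f) \<longleftrightarrow> (\<exists>x\<in>S. sat V w X (f x))"
proof -
  have "sat V w X (foldr (\<lambda>x acc. Disj (f x) acc) xs Bot) \<longleftrightarrow> (\<exists>x\<in>set xs. sat V w X (f x))" for xs
    by (induction xs) auto
  then show ?thesis
    unfolding BigDisj_def using set_some_distinct_list[OF assms] by simp
qed

lemma nonmodal_BigConj:
  assumes "finite S" "\<And>x. x \<in> S \<Longrightarrow> nonmodal (f x)"
  shows "nonmodal (BigConj S f)"
proof -
  have "set xs \<subseteq> S \<Longrightarrow> nonmodal (foldr (\<lambda>x acc. Conj (f x) acc) xs Top)" for xs
    using assms(2) by (induction xs) auto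
  then show ?thesis
    unfolding BigConj_def using set_some_distinct_list[OF assms(1)] by simp
qed

lemma nonmodal_BigDisj:
  assumes "finite S" "\<And>x. x \<in> S \<Longrightarrow> nonmodal (f x)"
  shows "nonmodal (BigDisj S f)"
proof -
  have "set xs \<subseteq> S \<Longrightarrow> nonmodal (foldr (\<lambda>x acc. Disj (f x) acc) xs Bot)" for xs
    using assms(2) by (induction xs) auto
  then show ?thesis
    unfolding BigDisj_def using set_some_distinct_list[OF assms(1)] by simp
qed

lemma ext_psubset_iff:
  "ext V X a \<subset> ext V X b \<longleftrightarrow>
     (\<forall>u\<in>X. sat V u X a \<longrightarrow> sat V u X b) \<and> (\<exists>u\<in>X. \<not> sat V u X a \<and> sat V u X b)"
  unfolding ext_def by auto

lemma sat_nonmodal: "nonmodal a \<Longrightarrow> sat V w X a \<longleftrightarrow> sat V w Y a"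
  by (induction a) auto

lemma maximal_iff_maximal_in_cofinal_family:
  assumes family: "\<And>A. A \<in> \<A> \<Longrightarrow> P A"
    and cofinal: "\<And>Z. P Z \<Longrightarrow> \<exists>A\<in>\<A>. Z \<subseteq> A"
  shows "P Y \<and> \<not> (\<exists>Z. P Z \<and> Y \<subset> Z) \<longleftrightarrow> Y \<in> \<A> \<and> \<not> (\<exists>A\<in>\<A>. Y \<subset> A)"
proof
  assume "P Y \<and> \<not> (\<exists>Z. P Z \<and> Y \<subset> Z)"
  then have "P Y" and maximal: "\<And>Z. P Z \<Longrightarrow> \<not> Y \<subset> Z"
    by auto
  obtain A where "A \<in> \<A>" "Y \<subseteq> A"
    using cofinal[OF \<open>P Y\<close>] by blast
  moreover have "Y = A"
    using \<open>Y \<subseteq> A\<close> maximal[OF family[OF \<open>A \<in> \<A>\<close>]] by (simp add: psubset_eq)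
  ultimately show "Y \<in> \<A> \<and> \<not> (\<exists>A\<in>\<A>. Y \<subset> A)"
    using family maximal by auto
next
  assume "Y \<in> \<A> \<and> \<not> (\<exists>A\<in>\<A>. Y \<subset> A)"
  then have "Y \<in> \<A>" and maximal: "\<And>A. A \<in> \<A> \<Longrightarrow> \<not> Y \<subset> A"
    by auto
  have "\<not> Y \<subset> Z" if "P Z" for Z
  proof
    assume "Y \<subset> Z"
    obtain A where "A \<in> \<A>" "Z \<subseteq> A"
      using cofinal[OF \<open>P Z\<close>] by blast
    then show False
      using maximal psubset_subset_trans[OF \<open>Y \<subset> Z\<close>] by blast
  qed
  then show "P Y \<and> \<not> (\<exists>Z. P Z \<and> Y \<subset> Z)"
    using family[OF \<open>Y \<in> \<A>\<close>] by blast
qed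

locale Theta_formula =
  fixes I :: "'i set" and phi psi :: "'i \<Rightarrow> 'p fm" and D :: "'i \<Rightarrow> 'n set"
    and chi :: "'n \<Rightarrow> 'p fm"
  assumes finite_I: "finite I"
    and finite_D: "\<And>i. i \<in> I \<Longrightarrow> finite (D i)"
    and nonmodal_phi_psi: "\<And>i. i \<in> I \<Longrightarrow> nonmodal (phi i) \<and> nonmodal (psi i)"
    and nonmodal_chi: "\<And>i n. i \<in> I \<Longrightarrow> n \<in> D i \<Longrightarrow> nonmodal (chi n)"
begin

abbreviation "\<Theta> \<equiv> Theta I phi psi D chi"

lemma finite_subset_I: "K \<subseteq> I \<Longrightarrow> finite K"
  using finite_I finite_subset by blast

lemma sat_phi_indep: "i \<in> I \<Longrightarrow> sat V v Y (phi i) \<longleftrightarrow> sat V v Z (phi i)"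
  by (rule sat_nonmodal) (simp add: nonmodal_phi_psi)

lemma sat_psi_indep: "i \<in> I \<Longrightarrow> sat V v Y (psi i) \<longleftrightarrow> sat V v Z (psi i)"
  by (rule sat_nonmodal) (simp add: nonmodal_phi_psi)

lemma sat_chi_indep: "i \<in> I \<Longrightarrow> n \<in> D i \<Longrightarrow> sat V v Y (chi n) \<longleftrightarrow> sat V v Z (chi n)"
  by (rule sat_nonmodal) (rule nonmodal_chi)

lemma nonmodal_info: "K \<subseteq> I \<Longrightarrow> nonmodal (info phi psi K)"
  unfolding info_def using nonmodal_phi_psi
  by (simp add: finite_subset_I nonmodal_BigConj nonmodal_BigDisj subset_iff)

lemma sat_info_indep:
  "K \<subseteq> I \<Longrightarrow> sat V v Y (info phi psi K) \<longleftrightarrow> sat V v Z (info phi psi K)"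
  by (rule sat_nonmodal) (rule nonmodal_info)

lemma sat_info:
  "K \<subseteq> I \<Longrightarrow> sat V v Y (info phi psi K) \<longleftrightarrow> (\<exists>k\<in>K. sat V v Y (phi k)) \<and> (\<forall>k\<in>K. sat V v Y (psi k))"
  unfolding info_def by (simp add: finite_subset_I sat_BigConj sat_BigDisj)

lemma sat_Theta:
  "sat V v Y \<Theta> \<longleftrightarrow>
     (\<exists>i\<in>I. sat V v Y (phi i) \<and> (\<forall>u\<in>Y. sat V u Y (psi i)) \<and> (\<forall>n\<in>D i. \<exists>u\<in>Y. sat V u Y (chi n)))"
  unfolding Theta_def theta_def by (simp add: finite_I finite_D sat_BigConj sat_BigDisj)

lemma sat_good:
  "K \<subseteq> I \<Longrightarrow> sat V v Y (good phi psi D chi K) \<longleftrightarrow>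
     (\<forall>k\<in>K. \<forall>n\<in>D k. \<exists>u\<in>Y. sat V u Y (info phi psi K) \<and> sat V u Y (chi n))"
  unfolding good_def using finite_D by (simp add: finite_subset_I sat_BigConj subset_iff)

lemma sat_maxf:
  assumes "K \<subseteq> I"
  shows "sat V v X (maxf I phi psi D chi K) \<longleftrightarrow> sat V v X (good phi psi D chi K) \<and>
     (\<forall>L\<subseteq>I. sat V v X (good phi psi D chi L) \<longrightarrow>
        \<not> ext V X (info phi psi K) \<subset> ext V X (info phi psi L))"
  unfolding maxf_def ext_psubset_iff by (simp add: finite_I sat_BigConj Ball_def) blast

lemma Theta_subset_ext_info:
  assumes "L \<subseteq> I" and good: "sat V w X (good phi psi D chi L)"
  shows "Theta_subset V \<Theta> X (ext V X (info phi psi L))"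
proof -
  let ?Y = "ext V X (info phi psi L)"
  have in_Y: "u \<in> ?Y \<longleftrightarrow> u \<in> X \<and> sat V u X (info phi psi L)" for u
    unfolding ext_def by simp
  have "sat V v ?Y \<Theta>" if v: "v \<in> ?Y" for v
  proof -
    obtain k where "k \<in> L" and phi_k: "sat V v X (phi k)"
      using v \<open>L \<subseteq> I\<close> by (auto simp: in_Y sat_info)
    have "k \<in> I"
      using \<open>k \<in> L\<close> \<open>L \<subseteq> I\<close> by blast
    have "sat V u ?Y (psi k)" if "u \<in> ?Y" for u
    proof -
      have "sat V u X (psi k)"
        using that \<open>k \<in> L\<close> \<open>L \<subseteq> I\<close> by (auto simp: in_Y sat_info)
      then show ?thesis
        using sat_psi_indep[OF \<open>k \<in> I\<close>, of V u X ?Y] by blast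
    qed
    moreover have "\<exists>u\<in>?Y. sat V u ?Y (chi n)" if n: "n \<in> D k" for n
    proof -
      obtain u where "u \<in> X" "sat V u X (info phi psi L)" "sat V u X (chi n)"
        using good \<open>k \<in> L\<close> n unfolding sat_good[OF \<open>L \<subseteq> I\<close>] by blast
      moreover from this have "u \<in> ?Y"
        using in_Y by blast
      ultimately show ?thesis
        using sat_chi_indep[OF \<open>k \<in> I\<close> n, of V u X ?Y] by blast
    qed
    ultimately show ?thesis
      unfolding sat_Theta using \<open>k \<in> I\<close> phi_k sat_phi_indep[OF \<open>k \<in> I\<close>, of V v X ?Y] by blast
  qed
  then show ?thesis
    unfolding Theta_subset_def ext_def by auto
qed

lemma Theta_subset_imp_subset_ext_info:
  assumes "Theta_subset V \<Theta> X Z"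
  shows "\<exists>K\<subseteq>I. Z \<subseteq> ext V X (info phi psi K) \<and> sat V w X (good phi psi D chi K)"
proof -
  define K where "K = {i \<in> I. (\<forall>u\<in>Z. sat V u Z (psi i)) \<and> (\<forall>n\<in>D i. \<exists>u\<in>Z. sat V u Z (chi n))}"
  have "K \<subseteq> I"
    unfolding K_def by simp
  have "Z \<subseteq> X" and Theta_on_Z: "\<And>v. v \<in> Z \<Longrightarrow> sat V v Z \<Theta>"
    using assms unfolding Theta_subset_def ext_def by auto
  have Z_sub: "Z \<subseteq> ext V X (info phi psi K)"
  proof
    fix v assume "v \<in> Z"
    obtain i where "i \<in> K" "sat V v Z (phi i)"
      using Theta_on_Z[OF \<open>v \<in> Z\<close>] unfolding sat_Theta K_def by auto
    moreover have "sat V v Z (psi k)" if "k \<in> K" for k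
      using that \<open>v \<in> Z\<close> unfolding K_def by simp
    ultimately have "sat V v Z (info phi psi K)"
      unfolding sat_info[OF \<open>K \<subseteq> I\<close>] by blast
    with \<open>v \<in> Z\<close> \<open>Z \<subseteq> X\<close> show "v \<in> ext V X (info phi psi K)"
      using sat_info_indep[OF \<open>K \<subseteq> I\<close>, of V v X Z] unfolding ext_def by blast
  qed
  have "sat V w X (good phi psi D chi K)"
    unfolding sat_good[OF \<open>K \<subseteq> I\<close>]
  proof (intro ballI)
    fix k n assume "k \<in> K" "n \<in> D k"
    then obtain u where "u \<in> Z" "sat V u Z (chi n)" and "k \<in> I"
      unfolding K_def by auto
    moreover from \<open>u \<in> Z\<close> have "u \<in> X" "sat V u X (info phi psi K)"
      using Z_sub unfolding ext_def by auto
    ultimately show "\<exists>u\<in>X. sat V u X (info phi psi K) \<and> sat V u X (chi n)"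
      using sat_chi_indep[OF \<open>k \<in> I\<close> \<open>n \<in> D k\<close>, of V u Z X] by blast
  qed
  with \<open>K \<subseteq> I\<close> Z_sub show ?thesis
    by blast
qed

definition good_info_sets :: "('p \<Rightarrow> 'w set) \<Rightarrow> 'w \<Rightarrow> 'w set \<Rightarrow> 'w set set" where
  "good_info_sets V w X =
     {ext V X (info phi psi K) | K. K \<subseteq> I \<and> sat V w X (good phi psi D chi K)}"

lemma good_info_setsI:
  "K \<subseteq> I \<Longrightarrow> sat V w X (good phi psi D chi K) \<Longrightarrow> ext V X (info phi psi K) \<in> good_info_sets V w X"
  unfolding good_info_sets_def by blast

lemma good_info_setsE:
  assumes "A \<in> good_info_sets V w X"
  obtains K where "K \<subseteq> I" "sat V w X (good phi psi D chi K)" "A = ext V X (info phi psi K)"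
  using assms unfolding good_info_sets_def by blast

lemma max_Theta_subset_iff_maximal_good_info_set:
  "max_Theta_subset V \<Theta> X Y \<longleftrightarrow>
     Y \<in> good_info_sets V w X \<and> \<not> (\<exists>A\<in>good_info_sets V w X. Y \<subset> A)"
  unfolding max_Theta_subset_def
proof (rule maximal_iff_maximal_in_cofinal_family)
  show "Theta_subset V \<Theta> X A" if "A \<in> good_info_sets V w X" for A
    using that by (elim good_info_setsE) (simp add: Theta_subset_ext_info)
  show "\<exists>A\<in>good_info_sets V w X. Z \<subseteq> A" if Z: "Theta_subset V \<Theta> X Z" for Z
  proof -
    obtain K where "K \<subseteq> I" "Z \<subseteq> ext V X (info phi psi K)" "sat V w X (good phi psi D chi K)"
      using Theta_subset_imp_subset_ext_info[OF Z, where w = w] by blast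
    then show ?thesis
      using good_info_setsI[of K V w X] by blast
  qed
qed

lemma max_Theta_subset_imp_ext_info:
  assumes "max_Theta_subset V \<Theta> X Y"
  shows "\<exists>K\<subseteq>I. Y = ext V X (info phi psi K) \<and> sat V w X (maxf I phi psi D chi K)"
proof -
  have "Y \<in> good_info_sets V w X" and maximal: "\<And>A. A \<in> good_info_sets V w X \<Longrightarrow> \<not> Y \<subset> A"
    using assms unfolding max_Theta_subset_iff_maximal_good_info_set[where w = w] by auto
  then obtain K where "K \<subseteq> I" "sat V w X (good phi psi D chi K)" "Y = ext V X (info phi psi K)"
    by (elim good_info_setsE)
  moreover have "sat V w X (maxf I phi psi D chi K)"
    unfolding sat_maxf[OF \<open>K \<subseteq> I\<close>] using calculation maximal good_info_setsI by metis
  ultimately show ?thesis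
    by blast
qed

lemma max_Theta_subset_ext_info:
  assumes "L \<subseteq> I" and "sat V w X (maxf I phi psi D chi L)"
  shows "max_Theta_subset V \<Theta> X (ext V X (info phi psi L))"
proof -
  have "sat V w X (good phi psi D chi L)"
    and maximal: "\<And>K. K \<subseteq> I \<Longrightarrow> sat V w X (good phi psi D chi K) \<Longrightarrow>
       \<not> ext V X (info phi psi L) \<subset> ext V X (info phi psi K)"
    using assms(2) unfolding sat_maxf[OF assms(1)] by auto
  have "ext V X (info phi psi L) \<in> good_info_sets V w X"
    using assms(1) \<open>sat V w X (good phi psi D chi L)\<close> by (rule good_info_setsI)
  moreover have "\<not> ext V X (info phi psi L) \<subset> A" if "A \<in> good_info_sets V w X" for A
    using that by (elim good_info_setsE) (simp add: maximal)
  ultimately show ?thesis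
    unfolding max_Theta_subset_iff_maximal_good_info_set[where w = w] by blast
qed

end

theorem lemma13:
  fixes I :: "'i set" and phi psi :: "'i \<Rightarrow> 'p fm" and D :: "'i \<Rightarrow> 'n set"
    and chi :: "'n \<Rightarrow> 'p fm" and W :: "'w set" and V :: "'p \<Rightarrow> 'w set"
    and w :: 'w and X :: "'w set"
  assumes "finite I"
    and "\<And>i. i \<in> I \<Longrightarrow> finite (D i)"
    and "\<And>i. i \<in> I \<Longrightarrow> nonmodal (phi i) \<and> nonmodal (psi i)"
    and "\<And>i n. i \<in> I \<Longrightarrow> n \<in> D i \<Longrightarrow> nonmodal (chi n)"
    and "W \<noteq> {}" and "\<And>p. V p \<subseteq> W"
    and "w \<in> W" and "X \<subseteq> W"
  shows "(\<forall>L\<subseteq>I. sat V w X (good phi psi D chi L) \<longrightarrow>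
            Theta_subset V (Theta I phi psi D chi) X (ext V X (info phi psi L)))
       \<and> (\<forall>Y. max_Theta_subset V (Theta I phi psi D chi) X Y \<longrightarrow>
            (\<exists>K\<subseteq>I. Y = ext V X (info phi psi K) \<and> sat V w X (maxf I phi psi D chi K)))
       \<and> (\<forall>L\<subseteq>I. sat V w X (maxf I phi psi D chi L) \<longrightarrow>
            max_Theta_subset V (Theta I phi psi D chi) X (ext V X (info phi psi L)))"
proof -
  interpret Theta_formula I phi psi D chi
    using assms(1-4) by unfold_locales
  show ?thesis
  proof (intro conjI allI impI)
    show "Theta_subset V \<Theta> X (ext V X (info phi psi L))"
      if "L \<subseteq> I" "sat V w X (good phi psi D chi L)" for L
      using that by (rule Theta_subset_ext_info)
    show "\<exists>K\<subseteq>I. Y = ext V X (info phi psi K) \<and> sat V w X (maxf I phi psi D chi K)"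
      if "max_Theta_subset V \<Theta> X Y" for Y
      using that by (rule max_Theta_subset_imp_ext_info)
    show "max_Theta_subset V \<Theta> X (ext V X (info phi psi L))"
      if "L \<subseteq> I" "sat V w X (maxf I phi psi D chi L)" for L
      using that by (rule max_Theta_subset_ext_info)
  qed
qed

end
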